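(* Let $G$ be an ordered abelian group, $\beta_0,\beta_1,\beta_{0,1}\in G$, and for $e=0,1$ let $(\gamma_{e,j})_{j<\lambda_e}$ ($\lambda_e$ a limit ordinal) be a well-ordered, monotone increasing family of elements $\ge0$ of $G$ without last element. Put $P_{0,j_0}=\beta_0+\gamma_{0,j_0}$, $P_{1,j_1}=\beta_1+\gamma_{1,j_1}$ and $P_{0,1,j_0,j_1}=\beta_{0,1}+\gamma_{0,j_0}+\gamma_{1,j_1}$. Then there exist ordinals $\rho_0<\lambda_0$, $\rho_1<\lambda_1$, a subset $A\subset[1,\lambda_0)$ and a map $\sigma:A\to[1,\lambda_1)$ such that $P_{0,j_0}$, $P_{1,j_1}$, $P_{0,1,j_0,j_1}$ are pairwise different for all $\rho_0<j_0<\lambda_0$, $\rho_1<j_1<\lambda_1$ with $j_1\neq\sigma(j_0)$ whenever $j_0\in A$. In particular, for all ordinals $\nu_0<\lambda_0$, $\nu_1<\lambda_1$ there exist $\nu_0<j_0<\lambda_0$, $\nu_1<j_1<\lambda_1$ such that $P_{0,j_0}$, $P_{1,j_1}$, $P_{0,1,j_0,j_1}$ are pairwise different. *)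

theory Defs
  imports Main
begin

text \<open>Indices j of a wellorder type stand for the ordinals j below lambda.
  The half-open interval [1, lambda) consists of all indices that are not the least one.\<close>
definition pos_idx :: "'j::wellorder set" where
  "pos_idx = {j. \<exists>k. k < j}"

end

theory Submission
  imports Defs
begin

text \<open>Since \<open>\<gamma>\<^sub>0, \<gamma>\<^sub>1\<close> are strictly increasing, the equations \<open>P\<^sub>0 = P\<^sub>0\<^sub>,\<^sub>1\<close>
  (i.e. \<open>\<beta>\<^sub>0\<^sub>,\<^sub>1 + \<gamma>\<^sub>1 j\<^sub>1 = \<beta>\<^sub>0\<close>) and \<open>P\<^sub>1 = P\<^sub>0\<^sub>,\<^sub>1\<close>
  (i.e. \<open>\<beta>\<^sub>0\<^sub>,\<^sub>1 + \<gamma>\<^sub>0 j\<^sub>0 = \<beta>\<^sub>1\<close>) each have at most one solution, so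
  both fail beyond suitable \<open>\<rho>\<^sub>1\<close>, \<open>\<rho>\<^sub>0\<close>. The remaining equation
  \<open>P\<^sub>0 = P\<^sub>1\<close> determines \<open>j\<^sub>1\<close> from \<open>j\<^sub>0\<close>; this is \<open>\<sigma>\<close>. As there is no
  last index, above any bound there are two candidates for \<open>j\<^sub>1\<close>, and one of
  them avoids \<open>\<sigma> j\<^sub>0\<close>.\<close>

lemma pos_idxI: "k < j \<Longrightarrow> j \<in> pos_idx"
  unfolding pos_idx_def by blast

lemma strict_mono_eventually_neq:
  fixes f :: "'a::linorder \<Rightarrow> 'b::order"
  assumes "strict_mono f"
  obtains r where "\<And>j. r < j \<Longrightarrow> f j \<noteq> c"
proof (cases "c \<in> range f")
  case True
  then obtain r where "f r = c" by blast
  with assms show ?thesis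
    using that by (metis strict_mono_less order.irrefl)
next
  case False
  then show ?thesis using that by blast
qed

lemma strict_mono_add_left:
  fixes f :: "'a::order \<Rightarrow> 'b::ordered_cancel_ab_semigroup_add"
  shows "strict_mono f \<Longrightarrow> strict_mono (\<lambda>j. a + f j)"
  by (simp add: strict_mono_def add_strict_left_mono)

lemma exists_pair_avoiding_graph:
  fixes \<rho>0 \<nu>0 :: "'a::linorder" and \<rho>1 \<nu>1 :: "'b::linorder"
  assumes "\<forall>i::'a. \<exists>i'. i < i'" and "\<forall>j::'b. \<exists>j'. j < j'"
    and "\<forall>j0 j1. \<rho>0 < j0 \<and> \<rho>1 < j1 \<and> (j0 \<in> A \<longrightarrow> j1 \<noteq> \<sigma> j0) \<longrightarrow> Q j0 j1"
  shows "\<exists>j0 j1. \<nu>0 < j0 \<and> \<nu>1 < j1 \<and> Q j0 j1"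
proof -
  obtain j0 where j0: "max \<nu>0 \<rho>0 < j0" using assms(1) by blast
  obtain j1 where j1: "max \<nu>1 \<rho>1 < j1" using assms(2) by blast
  obtain j1' where j1': "j1 < j1'" using assms(2) by blast
  have "\<sigma> j0 \<noteq> j1 \<or> \<sigma> j0 \<noteq> j1'" using j1' by auto
  with j0 j1 j1' assms(3) show ?thesis
    by (metis max.strict_boundedE order.strict_trans)
qed

theorem lemma1p3:
  fixes \<beta>0 \<beta>1 \<beta>01 :: "'g::linordered_ab_group_add"
    and \<gamma>0 :: "'i::wellorder \<Rightarrow> 'g"
    and \<gamma>1 :: "'j::wellorder \<Rightarrow> 'g"
  assumes lim0: "\<forall>i::'i. \<exists>i'. i < i'"
    and lim1: "\<forall>j::'j. \<exists>j'. j < j'"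
    and mono0: "strict_mono \<gamma>0"
    and mono1: "strict_mono \<gamma>1"
    and nonneg0: "\<forall>i. 0 \<le> \<gamma>0 i"
    and nonneg1: "\<forall>j. 0 \<le> \<gamma>1 j"
  shows "(\<exists>(\<rho>0::'i) (\<rho>1::'j) (A::'i set) (\<sigma>::'i \<Rightarrow> 'j).
            A \<subseteq> pos_idx \<and> \<sigma> ` A \<subseteq> pos_idx \<and>
            (\<forall>j0 j1. \<rho>0 < j0 \<and> \<rho>1 < j1 \<and> (j0 \<in> A \<longrightarrow> j1 \<noteq> \<sigma> j0) \<longrightarrow>
               \<beta>0 + \<gamma>0 j0 \<noteq> \<beta>1 + \<gamma>1 j1 \<and>
               \<beta>0 + \<gamma>0 j0 \<noteq> \<beta>01 + \<gamma>0 j0 + \<gamma>1 j1 \<and>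
               \<beta>1 + \<gamma>1 j1 \<noteq> \<beta>01 + \<gamma>0 j0 + \<gamma>1 j1))
       \<and> (\<forall>(\<nu>0::'i) (\<nu>1::'j). \<exists>j0 j1. \<nu>0 < j0 \<and> \<nu>1 < j1 \<and>
               \<beta>0 + \<gamma>0 j0 \<noteq> \<beta>1 + \<gamma>1 j1 \<and>
               \<beta>0 + \<gamma>0 j0 \<noteq> \<beta>01 + \<gamma>0 j0 + \<gamma>1 j1 \<and>
               \<beta>1 + \<gamma>1 j1 \<noteq> \<beta>01 + \<gamma>0 j0 + \<gamma>1 j1)"
proof -
  obtain \<rho>0 where \<rho>0: "\<And>j0. \<rho>0 < j0 \<Longrightarrow> \<beta>01 + \<gamma>0 j0 \<noteq> \<beta>1"
    using strict_mono_eventually_neq[OF strict_mono_add_left[where a=\<beta>01, OF mono0], where c=\<beta>1]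
    by blast
  obtain \<rho>1 where \<rho>1: "\<And>j1. \<rho>1 < j1 \<Longrightarrow> \<beta>01 + \<gamma>1 j1 \<noteq> \<beta>0"
    using strict_mono_eventually_neq[OF strict_mono_add_left[where a=\<beta>01, OF mono1], where c=\<beta>0]
    by blast
  define \<sigma> where "\<sigma> j0 = inv \<gamma>1 (\<beta>0 + \<gamma>0 j0 - \<beta>1)" for j0
  define A where "A = {j0 \<in> pos_idx. \<sigma> j0 \<in> pos_idx}"
  have \<sigma>: "\<sigma> j0 = j1" if "\<beta>0 + \<gamma>0 j0 = \<beta>1 + \<gamma>1 j1" for j0 j1
    using that strict_mono_imp_inj_on[OF mono1] unfolding \<sigma>_def
    by (simp add: algebra_simps)
  have distinct: "\<forall>j0 j1. \<rho>0 < j0 \<and> \<rho>1 < j1 \<and> (j0 \<in> A \<longrightarrow> j1 \<noteq> \<sigma> j0) \<longrightarrow>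
               \<beta>0 + \<gamma>0 j0 \<noteq> \<beta>1 + \<gamma>1 j1 \<and>
               \<beta>0 + \<gamma>0 j0 \<noteq> \<beta>01 + \<gamma>0 j0 + \<gamma>1 j1 \<and>
               \<beta>1 + \<gamma>1 j1 \<noteq> \<beta>01 + \<gamma>0 j0 + \<gamma>1 j1"
    using \<rho>0 \<rho>1 \<sigma> unfolding A_def by (auto intro: pos_idxI simp: algebra_simps)
  moreover have "A \<subseteq> pos_idx" "\<sigma> ` A \<subseteq> pos_idx"
    unfolding A_def by auto
  ultimately show ?thesis
    using exists_pair_avoiding_graph[OF lim0 lim1 distinct] by blast
qed

end
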